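(* Let $G=G(n_1,n_2,p)$ where $1\ll n_1=\lambda n_2$ for a constant $0<\lambda\leq1$, and $p=\frac{d}{\sqrt{n_1n_2}}$ for a constant $d>1$. Then whp the number of small balanced unicyclic components of $G$ is $o(\log^5 n_1)$.
   Context: $G(n_1,n_2,p)$ is the binomial random bipartite graph with partition classes $N_1,N_2$ of sizes $n_1,n_2$, each edge between them present independently with probability $p$. For $p=\frac{d}{\sqrt{n_1n_2}}$ with $d>1$, there exist positive constants $\beta_0,\beta_1$ (from a result of Johansson) such that whp at most one component of $G$ meets $N_1$ in more than $\beta_1\sqrt{n_1\log n_1}$ vertices and no component meets $N_1$ in $k$ vertices with $k\in[\beta_0\log^2 n_1,\beta_1\sqrt{n_1\log n_1}]$; fix such $\beta_0$. A component $C$ is small if $|C\cap N_1|\leq\beta_0\log^2 n_1$, and balanced if $|C\cap N_2|\leq 2pn_2|C\cap N_1|$. A component is unicyclic if it contains exactly one cycle. $\log$ is the natural logarithm; "whp" means with probability tending to $1$ as $n_1\to\infty$. *)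

theory Defs
  imports "HOL-Probability.Probability" "HOL-Library.Landau_Symbols"
begin

text \<open>Vertices: Inl i (i < n1) form N1,
  Inr j (j < n2) form N2. A graph is given by its edge indicator on pairs (i,j) in N1 x N2;
  each such pair is an edge independently with probability p.\<close>

definition bip_random :: "nat \<Rightarrow> nat \<Rightarrow> real \<Rightarrow> (nat \<times> nat \<Rightarrow> bool) pmf" where
  "bip_random n1 n2 p = Pi_pmf ({..<n1} \<times> {..<n2}) False (\<lambda>_. bernoulli_pmf p)"

definition bip_V :: "nat \<Rightarrow> nat \<Rightarrow> (nat + nat) set" where
  "bip_V n1 n2 = Inl ` {..<n1} \<union> Inr ` {..<n2}"

definition N1_part :: "(nat + nat) set \<Rightarrow> (nat + nat) set" where
  "N1_part C = C \<inter> range Inl"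

definition N2_part :: "(nat + nat) set \<Rightarrow> (nat + nat) set" where
  "N2_part C = C \<inter> range Inr"

definition edge_adj :: "(nat \<times> nat) set \<Rightarrow> nat + nat \<Rightarrow> nat + nat \<Rightarrow> bool" where
  "edge_adj S u v = (\<exists>i j. (i, j) \<in> S \<and> ((u = Inl i \<and> v = Inr j) \<or> (u = Inr j \<and> v = Inl i)))"

definition bip_edges :: "nat \<Rightarrow> nat \<Rightarrow> (nat \<times> nat \<Rightarrow> bool) \<Rightarrow> (nat \<times> nat) set" where
  "bip_edges n1 n2 G = {(i, j). i < n1 \<and> j < n2 \<and> G (i, j)}"

definition bip_components :: "nat \<Rightarrow> nat \<Rightarrow> (nat \<times> nat \<Rightarrow> bool) \<Rightarrow> (nat + nat) set set" where
  "bip_components n1 n2 G =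
     {C. \<exists>u \<in> bip_V n1 n2. C = {v \<in> bip_V n1 n2. (edge_adj (bip_edges n1 n2 G))\<^sup>*\<^sup>* u v}}"

definition edge_verts :: "(nat \<times> nat) set \<Rightarrow> (nat + nat) set" where
  "edge_verts S = Inl ` fst ` S \<union> Inr ` snd ` S"

definition edge_deg :: "(nat \<times> nat) set \<Rightarrow> nat + nat \<Rightarrow> nat" where
  "edge_deg S v = (case v of Inl i \<Rightarrow> card {j. (i, j) \<in> S} | Inr j \<Rightarrow> card {i. (i, j) \<in> S})"

definition is_cycle :: "(nat \<times> nat) set \<Rightarrow> bool" where
  "is_cycle S = (S \<noteq> {} \<and> finite S \<and> (\<forall>v \<in> edge_verts S. edge_deg S v = 2) \<and>
     (\<forall>u \<in> edge_verts S. \<forall>v \<in> edge_verts S. (edge_adj S)\<^sup>*\<^sup>* u v))"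

definition comp_edges :: "nat \<Rightarrow> nat \<Rightarrow> (nat \<times> nat \<Rightarrow> bool) \<Rightarrow> (nat + nat) set \<Rightarrow> (nat \<times> nat) set" where
  "comp_edges n1 n2 G C = {(i, j) \<in> bip_edges n1 n2 G. Inl i \<in> C}"

definition unicyclic :: "nat \<Rightarrow> nat \<Rightarrow> (nat \<times> nat \<Rightarrow> bool) \<Rightarrow> (nat + nat) set \<Rightarrow> bool" where
  "unicyclic n1 n2 G C = (card {S. S \<subseteq> comp_edges n1 n2 G C \<and> is_cycle S} = 1)"

definition small_comp :: "real \<Rightarrow> nat \<Rightarrow> (nat + nat) set \<Rightarrow> bool" where
  "small_comp \<beta>0 n1 C = (real (card (N1_part C)) \<le> \<beta>0 * (ln (real n1))\<^sup>2)"

definition balanced_comp :: "real \<Rightarrow> nat \<Rightarrow> (nat + nat) set \<Rightarrow> bool" where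
  "balanced_comp p n2 C = (real (card (N2_part C)) \<le> 2 * p * real n2 * real (card (N1_part C)))"

definition num_sbu :: "real \<Rightarrow> real \<Rightarrow> nat \<Rightarrow> nat \<Rightarrow> (nat \<times> nat \<Rightarrow> bool) \<Rightarrow> nat" where
  "num_sbu \<beta>0 p n1 n2 G = card {C \<in> bip_components n1 n2 G.
      small_comp \<beta>0 n1 C \<and> balanced_comp p n2 C \<and> unicyclic n1 n2 G C}"

definition johansson_event :: "real \<Rightarrow> real \<Rightarrow> nat \<Rightarrow> nat \<Rightarrow> (nat \<times> nat \<Rightarrow> bool) \<Rightarrow> bool" where
  "johansson_event \<beta>0 \<beta>1 n1 n2 G =
     (card {C \<in> bip_components n1 n2 G.
        real (card (N1_part C)) > \<beta>1 * sqrt (real n1 * ln (real n1))} \<le> 1 \<and>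
      (\<forall>C \<in> bip_components n1 n2 G.
        \<not> (\<beta>0 * (ln (real n1))\<^sup>2 \<le> real (card (N1_part C)) \<and>
           real (card (N1_part C)) \<le> \<beta>1 * sqrt (real n1 * ln (real n1)))))"

end

theory Submission
  imports Defs "HOL-Real_Asymp.Real_Asymp"
begin

text \<open>A first-moment argument. If \<open>C\<close> is a unicyclic component with vertex classes \<open>A \<subseteq> N\<^sub>1\<close>
  and \<open>B \<subseteq> N\<^sub>2\<close>, then \<open>G\<close> contains a spanning tree of \<open>A \<union> B\<close> plus one more edge, but none of the
  \<open>a(n\<^sub>2 - b) + b(n\<^sub>1 - a)\<close> pairs leaving \<open>A \<union> B\<close>, where \<open>a = |A|, b = |B|\<close>. Encoding spanning
  trees by parent maps, a union bound gives probability at most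
  \<open>b^a a^b ab p^(a+b) (1 - p)^(a(n\<^sub>2 - b) + b(n\<^sub>1 - a))\<close>. Summed over the \<open>(n\<^sub>1 choose a)(n\<^sub>2 choose b)\<close>
  choices of \<open>(A, B)\<close>, the estimates \<open>(n choose k) \<le> (en/k)^k\<close> and \<open>ln y \<le> y - 1\<close> bound this by
  \<open>O(a\<^sup>2 exp (-(d - 1 - ln d) a)) = O(1)\<close> whenever \<open>pab = o(1)\<close>, which holds for small balanced
  components. There are \<open>O(log\<^sup>4 n\<^sub>1)\<close> admissible size pairs \<open>(a, b)\<close>, so the expected number of
  small balanced unicyclic components is \<open>O(log\<^sup>4 n\<^sub>1)\<close>, and Markov's inequality with threshold
  \<open>(log n\<^sub>1)^(9/2)\<close> concludes.\<close>

section \<open>Breadth-first spanning trees\<close>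

lemma edge_adj_sym: "edge_adj S x y \<Longrightarrow> edge_adj S y x"
  by (auto simp: edge_adj_def)

lemma rtranclp_edge_adj_sym: "(edge_adj S)\<^sup>*\<^sup>* x y \<Longrightarrow> (edge_adj S)\<^sup>*\<^sup>* y x"
  by (metis edge_adj_sym symp_rtranclp sympD sympI)

lemma edge_adj_in_edge_verts: "edge_adj S v w \<Longrightarrow> w \<in> edge_verts S"
  by (auto simp: edge_adj_def edge_verts_def image_iff; force)

lemma edge_deg_eq_card_adj: "edge_deg S v = card {w. edge_adj S v w}"
proof (cases v)
  case (Inl i)
  then have "{w. edge_adj S v w} = Inr ` {j. (i, j) \<in> S}"
    by (auto simp: edge_adj_def)
  then show ?thesis using Inl by (simp add: edge_deg_def card_image)
next
  case (Inr j)
  then have "{w. edge_adj S v w} = Inl ` {i. (i, j) \<in> S}"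
    by (auto simp: edge_adj_def)
  then show ?thesis using Inr by (simp add: edge_deg_def card_image)
qed

fun edge_pair :: "nat + nat \<Rightarrow> nat + nat \<Rightarrow> nat \<times> nat" where
  "edge_pair (Inl i) (Inr j) = (i, j)"
| "edge_pair (Inr j) (Inl i) = (i, j)"
| "edge_pair _ _ = (0, 0)"

lemma edge_pair_commute: "edge_pair x y = edge_pair y x"
  by (cases x; cases y) auto

lemma edge_adj_edge_pair: "edge_adj S x y \<Longrightarrow> edge_pair x y \<in> S"
  by (auto simp: edge_adj_def)

lemma edge_pair_eq_cases:
  assumes "edge_adj S x y" "edge_adj S' x' y'" "edge_pair x y = edge_pair x' y'"
  shows "x = x' \<and> y = y' \<or> x = y' \<and> y = x'"
  using assms by (auto simp: edge_adj_def)

definition bfs_parent :: "('a \<Rightarrow> 'a \<Rightarrow> bool) \<Rightarrow> 'a set \<Rightarrow> 'a \<Rightarrow> ('a \<Rightarrow> 'a) \<Rightarrow> ('a \<Rightarrow> nat) \<Rightarrow> bool"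
  where "bfs_parent R C r par dep \<longleftrightarrow>
    (\<forall>v \<in> C - {r}. R (par v) v \<and> par v \<in> C \<and> Suc (dep (par v)) = dep v)"

lemma exists_bfs_parent:
  assumes r: "r \<in> C" and closed: "\<And>x y. x \<in> C \<Longrightarrow> R x y \<Longrightarrow> y \<in> C"
    and conn: "\<And>y. y \<in> C \<Longrightarrow> R\<^sup>*\<^sup>* r y"
  shows "\<exists>par dep. bfs_parent R C r par dep"
proof -
  define dep where "dep v = (LEAST n. (R ^^ n) r v)" for v
  have reach_in_C: "(R ^^ n) r w \<Longrightarrow> w \<in> C" for n w
  proof (induction n arbitrary: w)
    case 0
    then show ?case using r by simp
  next
    case (Suc n)
    then obtain y where "(R ^^ n) r y" "R y w" by (auto elim: relpowp_Suc_E)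
    then show ?case using Suc closed by blast
  qed
  have "\<exists>w. R w v \<and> w \<in> C \<and> Suc (dep w) = dep v" if v: "v \<in> C - {r}" for v
  proof -
    obtain n where "(R ^^ n) r v" using conn v by (auto simp: rtranclp_power)
    then have dv: "(R ^^ dep v) r v" unfolding dep_def by (rule LeastI)
    then obtain k where k: "dep v = Suc k" using v by (cases "dep v") auto
    with dv obtain w where w: "(R ^^ k) r w" "R w v" by (auto elim: relpowp_Suc_E)
    have "dep w \<le> k" unfolding dep_def using w(1) by (rule Least_le)
    moreover have "(R ^^ dep w) r w" unfolding dep_def using w(1) by (rule LeastI)
    then have "(R ^^ Suc (dep w)) r v" using w(2) by auto
    then have "dep v \<le> Suc (dep w)" unfolding dep_def by (rule Least_le)
    ultimately show ?thesis using k w reach_in_C by auto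
  qed
  then show ?thesis unfolding bfs_parent_def by metis
qed

definition parent_edges :: "(nat + nat) set \<Rightarrow> nat + nat \<Rightarrow> (nat + nat \<Rightarrow> nat + nat) \<Rightarrow> (nat \<times> nat) set"
  where "parent_edges C r par = (\<lambda>v. edge_pair v (par v)) ` (C - {r})"

lemma inj_on_parent_edge:
  assumes tree: "bfs_parent (edge_adj E) C r par dep"
  shows "inj_on (\<lambda>v. edge_pair v (par v)) (C - {r})"
proof (rule inj_onI)
  fix u v
  assume u: "u \<in> C - {r}" and v: "v \<in> C - {r}" and eq: "edge_pair u (par u) = edge_pair v (par v)"
  have adj: "edge_adj E u (par u)" "edge_adj E v (par v)"
    using tree u v by (auto simp: bfs_parent_def intro: edge_adj_sym)
  have "Suc (dep (par u)) = dep u" "Suc (dep (par v)) = dep v"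
    using tree u v by (auto simp: bfs_parent_def)
  then show "u = v" using edge_pair_eq_cases[OF adj eq] by auto
qed

lemma card_parent_edges:
  assumes "bfs_parent (edge_adj E) C r par dep" "finite C" "r \<in> C"
  shows "card (parent_edges C r par) = card C - 1"
  using assms by (simp add: parent_edges_def card_image[OF inj_on_parent_edge])

lemma parent_edges_subset:
  assumes "bfs_parent (edge_adj E) C r par dep"
  shows "parent_edges C r par \<subseteq> E"
proof -
  have "edge_pair v (par v) \<in> E" if "v \<in> C - {r}" for v
    using assms that edge_adj_edge_pair[of E "par v" v]
    by (simp add: bfs_parent_def edge_pair_commute)
  then show ?thesis unfolding parent_edges_def by blast
qed

text \<open>The deepest vertex of the cycle would have both of its cycle neighbours as its parent.\<close>
lemma cycle_not_subset_parent_edges: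
  assumes tree: "bfs_parent (edge_adj E) C r par dep"
    and cyc: "is_cycle S" and SC: "edge_verts S \<subseteq> C"
  shows "\<not> S \<subseteq> parent_edges C r par"
proof
  assume sub: "S \<subseteq> parent_edges C r par"
  have fin: "finite (edge_verts S)" "edge_verts S \<noteq> {}"
    using cyc by (auto simp: is_cycle_def edge_verts_def)
  define m where "m = Max (dep ` edge_verts S)"
  have "m \<in> dep ` edge_verts S" unfolding m_def using fin by (intro Max_in) auto
  then obtain v where v: "v \<in> edge_verts S" "dep v = m" by auto
  have deepest: "dep w \<le> dep v" if "w \<in> edge_verts S" for w
    using that fin v(2) unfolding m_def by auto
  have to_parent: "w = par v" if adj: "edge_adj S v w" for w
  proof -
    obtain u where u: "u \<in> C - {r}" "edge_pair v w = edge_pair u (par u)"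
      using sub edge_adj_edge_pair[OF adj] by (auto simp: parent_edges_def)
    have "edge_adj E u (par u)" "Suc (dep (par u)) = dep u"
      using tree u(1) by (auto simp: bfs_parent_def intro: edge_adj_sym)
    moreover have "dep w \<le> dep v" using deepest edge_adj_in_edge_verts[OF adj] by blast
    ultimately show ?thesis using edge_pair_eq_cases[OF adj _ u(2)] by force
  qed
  have "card {w. edge_adj S v w} = 2"
    using cyc v(1) by (auto simp: is_cycle_def edge_deg_eq_card_adj[symmetric])
  then obtain w1 w2 where "{w. edge_adj S v w} = {w1, w2}" "w1 \<noteq> w2"
    by (auto simp: card_2_iff)
  then show False using to_parent by auto
qed

section \<open>Unicyclic components and their witnesses\<close>

definition bip_vertices :: "nat set \<Rightarrow> nat set \<Rightarrow> (nat + nat) set"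
  where "bip_vertices A B = Inl ` A \<union> Inr ` B"

definition opposite_side :: "nat set \<Rightarrow> nat set \<Rightarrow> nat + nat \<Rightarrow> (nat + nat) set"
  where "opposite_side A B v = (case v of Inl _ \<Rightarrow> Inr ` B | Inr _ \<Rightarrow> Inl ` A)"

text \<open>A spanning tree on \<open>A \<union> B\<close>, encoded by a parent map towards the root \<open>Inl (Min A)\<close> (whose
  own value is irrelevant), plus one further edge.\<close>
definition unicyclic_witnesses :: "nat set \<Rightarrow> nat set \<Rightarrow> (nat \<times> nat) set set"
  where "unicyclic_witnesses A B =
    (\<lambda>(par, e). parent_edges (bip_vertices A B) (Inl (Min A)) par \<union> {e}) `
      (PiE (bip_vertices A B) (opposite_side A B) \<times> (A \<times> B))"

definition boundary_pairs :: "nat \<Rightarrow> nat \<Rightarrow> nat set \<Rightarrow> nat set \<Rightarrow> (nat \<times> nat) set"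
  where "boundary_pairs n1 n2 A B = {(i, j). i < n1 \<and> j < n2 \<and> (i \<in> A \<longleftrightarrow> j \<notin> B)}"

definition unicyclic_component_event :: "nat \<Rightarrow> nat \<Rightarrow> nat set \<Rightarrow> nat set \<Rightarrow> (nat \<times> nat \<Rightarrow> bool) set"
  where "unicyclic_component_event n1 n2 A B = {G. (\<forall>e \<in> boundary_pairs n1 n2 A B. \<not> G e) \<and>
    (\<exists>H \<in> unicyclic_witnesses A B. card H = card A + card B \<and> (\<forall>e \<in> H. G e))}"

lemma card_bip_vertices: "finite A \<Longrightarrow> finite B \<Longrightarrow> card (bip_vertices A B) = card A + card B"
  unfolding bip_vertices_def by (subst card_Un_disjoint) (auto simp: card_image)

lemma parent_edges_insert_in_unicyclic_witnesses:
  assumes tree: "bfs_parent (edge_adj E) (bip_vertices A B) (Inl (Min A)) par dep"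
    and B: "finite B" "B \<noteq> {}" and e: "e \<in> A \<times> B"
  shows "parent_edges (bip_vertices A B) (Inl (Min A)) par \<union> {e} \<in> unicyclic_witnesses A B"
proof -
  define C where "C = bip_vertices A B"
  define r :: "nat + nat" where "r = Inl (Min A)"
  define par' where "par' = restrict (\<lambda>v. if v = r then Inr (Min B) else par v) C"
  have "par' v \<in> opposite_side A B v" if v: "v \<in> C" for v
  proof (cases "v = r")
    case True
    then show ?thesis using Min_in[OF B] v by (simp add: par'_def r_def opposite_side_def)
  next
    case False
    then have "edge_adj E (par v) v" "par v \<in> C" using tree v by (auto simp: bfs_parent_def C_def r_def)
    then show ?thesis using False v
      by (cases v) (auto simp: par'_def opposite_side_def edge_adj_def C_def bip_vertices_def)
  qed
  then have "par' \<in> PiE C (opposite_side A B)" by (auto simp: par'_def)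
  moreover have "parent_edges C r par' = parent_edges C r par"
    unfolding parent_edges_def by (intro image_cong) (auto simp: par'_def)
  ultimately show ?thesis
    unfolding unicyclic_witnesses_def using e
    by (intro image_eqI[where x = "(par', e)"]) (auto simp: C_def r_def)
qed

lemma unicyclic_witness_exists:
  assumes fin: "finite A" "finite B"
    and closed: "\<And>x y. x \<in> bip_vertices A B \<Longrightarrow> edge_adj E x y \<Longrightarrow> y \<in> bip_vertices A B"
    and conn: "\<And>x y. x \<in> bip_vertices A B \<Longrightarrow> y \<in> bip_vertices A B \<Longrightarrow> (edge_adj E)\<^sup>*\<^sup>* x y"
    and S: "is_cycle S" "S \<subseteq> E" "edge_verts S \<subseteq> bip_vertices A B"
  shows "\<exists>H \<in> unicyclic_witnesses A B. card H = card A + card B \<and> H \<subseteq> E"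
proof -
  define C where "C = bip_vertices A B"
  obtain i j where "(i, j) \<in> S" using S(1) by (auto simp: is_cycle_def)
  then have AB_ne: "A \<noteq> {}" "B \<noteq> {}"
    using S(3) by (auto simp: edge_verts_def bip_vertices_def image_iff)
  define r :: "nat + nat" where "r = Inl (Min A)"
  have r: "r \<in> C" using Min_in[OF fin(1) AB_ne(1)] by (simp add: r_def C_def bip_vertices_def)
  obtain par dep where tree: "bfs_parent (edge_adj E) C r par dep"
    using exists_bfs_parent[of r C "edge_adj E"] r closed conn unfolding C_def by blast
  obtain e where e: "e \<in> S" "e \<notin> parent_edges C r par"
    using cycle_not_subset_parent_edges[OF tree S(1)] S(3) unfolding C_def by blast
  have "e \<in> A \<times> B"
  proof (cases e)
    case (Pair i j)
    then have "Inl i \<in> edge_verts S" "Inr j \<in> edge_verts S"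
      using e(1) by (force simp: edge_verts_def)+
    then show ?thesis using Pair S(3) by (auto simp: bip_vertices_def)
  qed
  define H where "H = parent_edges C r par \<union> {e}"
  have "H \<in> unicyclic_witnesses A B"
    using parent_edges_insert_in_unicyclic_witnesses[OF _ fin(2) AB_ne(2) \<open>e \<in> A \<times> B\<close>] tree
    by (simp add: H_def C_def r_def)
  moreover have "card H = card A + card B"
  proof -
    have "finite C" using fin by (simp add: C_def bip_vertices_def)
    then have "card H = card C - 1 + 1"
      unfolding H_def using e(2) card_parent_edges[OF tree _ r]
      by (subst card_Un_disjoint) (auto simp: parent_edges_def)
    also have "\<dots> = card C" using \<open>finite C\<close> r by (cases "card C") auto
    finally show ?thesis using card_bip_vertices[OF fin] by (simp add: C_def)
  qed
  moreover have "H \<subseteq> E" using parent_edges_subset[OF tree] e(1) S(2) by (auto simp: H_def)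
  ultimately show ?thesis by blast
qed

lemma bip_component_closed:
  assumes "C \<in> bip_components n1 n2 G" "x \<in> C" "edge_adj (bip_edges n1 n2 G) x y"
  shows "y \<in> C"
proof -
  obtain u where C: "C = {v \<in> bip_V n1 n2. (edge_adj (bip_edges n1 n2 G))\<^sup>*\<^sup>* u v}"
    using assms(1) by (auto simp: bip_components_def)
  have "y \<in> bip_V n1 n2"
    using assms(3) by (auto simp: edge_adj_def bip_edges_def bip_V_def)
  then show ?thesis using assms(2,3) C by (auto intro: rtranclp.rtrancl_into_rtrancl)
qed

lemma bip_component_connected:
  assumes "C \<in> bip_components n1 n2 G" "x \<in> C" "y \<in> C"
  shows "(edge_adj (bip_edges n1 n2 G))\<^sup>*\<^sup>* x y"
proof -
  obtain u where "x \<in> {v \<in> bip_V n1 n2. (edge_adj (bip_edges n1 n2 G))\<^sup>*\<^sup>* u v}"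
    and "y \<in> {v \<in> bip_V n1 n2. (edge_adj (bip_edges n1 n2 G))\<^sup>*\<^sup>* u v}"
    using assms by (auto simp: bip_components_def)
  then show ?thesis by (auto intro: rtranclp_trans[OF rtranclp_edge_adj_sym])
qed

lemma bip_component_eq_bip_vertices:
  assumes "C \<in> bip_components n1 n2 G"
  shows "C = bip_vertices {i. Inl i \<in> C} {j. Inr j \<in> C}"
    and "{i. Inl i \<in> C} \<subseteq> {..<n1}" "{j. Inr j \<in> C} \<subseteq> {..<n2}"
proof -
  have sub: "C \<subseteq> bip_V n1 n2" using assms by (auto simp: bip_components_def)
  show "C = bip_vertices {i. Inl i \<in> C} {j. Inr j \<in> C}"
    by (auto simp: bip_vertices_def image_iff) (metis sum.exhaust)
  show "{i. Inl i \<in> C} \<subseteq> {..<n1}" "{j. Inr j \<in> C} \<subseteq> {..<n2}"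
    using sub by (auto simp: bip_V_def)
qed

lemma edge_verts_comp_edges_subset:
  assumes C: "C \<in> bip_components n1 n2 G"
  shows "edge_verts (comp_edges n1 n2 G C) \<subseteq> C"
proof -
  have "Inl i \<in> C \<and> Inr j \<in> C" if "(i, j) \<in> comp_edges n1 n2 G C" for i j
  proof -
    have "Inl i \<in> C" "(i, j) \<in> bip_edges n1 n2 G" using that by (auto simp: comp_edges_def)
    moreover have "edge_adj (bip_edges n1 n2 G) (Inl i) (Inr j)"
      using \<open>(i, j) \<in> bip_edges n1 n2 G\<close> by (auto simp: edge_adj_def)
    ultimately show ?thesis using bip_component_closed[OF C] by blast
  qed
  then show ?thesis by (force simp: edge_verts_def)
qed

lemma unicyclic_component_in_event:
  assumes C: "C \<in> bip_components n1 n2 G" and uc: "unicyclic n1 n2 G C"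
  shows "G \<in> unicyclic_component_event n1 n2 {i. Inl i \<in> C} {j. Inr j \<in> C}"
proof -
  define A where "A = {i. Inl i \<in> C}"
  define B where "B = {j. Inr j \<in> C}"
  define E where "E = bip_edges n1 n2 G"
  have C_eq: "C = bip_vertices A B"
    using bip_component_eq_bip_vertices(1)[OF C] unfolding A_def B_def .
  have fin: "finite A" "finite B"
    using bip_component_eq_bip_vertices(2,3)[OF C] unfolding A_def B_def
    by (auto intro: finite_subset)
  obtain S where S: "S \<subseteq> comp_edges n1 n2 G C" "is_cycle S"
    using uc unfolding unicyclic_def by (metis (no_types, lifting) card_1_singletonE insertI1 mem_Collect_eq)
  have SE: "S \<subseteq> E" using S(1) by (auto simp: comp_edges_def E_def)
  have "edge_verts S \<subseteq> edge_verts (comp_edges n1 n2 G C)" using S(1) unfolding edge_verts_def by blast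
  then have "edge_verts S \<subseteq> C" using edge_verts_comp_edges_subset[OF C] by blast
  then obtain H where H: "H \<in> unicyclic_witnesses A B" "card H = card A + card B" "H \<subseteq> E"
    using unicyclic_witness_exists[OF fin _ _ S(2) SE] bip_component_closed[OF C]
      bip_component_connected[OF C] unfolding C_eq E_def by blast
  have "\<not> G (i, j)" if "(i, j) \<in> boundary_pairs n1 n2 A B" for i j
  proof
    assume "G (i, j)"
    then have "edge_adj E (Inl i) (Inr j)" "edge_adj E (Inr j) (Inl i)"
      using that by (auto simp: boundary_pairs_def E_def bip_edges_def edge_adj_def)
    then show False
      using that bip_component_closed[OF C] unfolding E_def by (auto simp: boundary_pairs_def A_def B_def)
  qed
  then show ?thesis
    using H by (auto simp: unicyclic_component_event_def E_def bip_edges_def A_def[symmetric] B_def[symmetric])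
qed

section \<open>The first-moment bound\<close>

lemma prob_Pi_bernoulli_pattern:
  assumes D: "finite D" and HZ: "H \<subseteq> D" "Z \<subseteq> D" "H \<inter> Z = {}" and p: "0 \<le> p" "p \<le> 1"
  shows "measure_pmf.prob (Pi_pmf D False (\<lambda>_. bernoulli_pmf p)) {G. (\<forall>e\<in>Z. \<not> G e) \<and> (\<forall>e\<in>H. G e)}
    = p ^ card H * (1 - p) ^ card Z"
proof -
  define V where "V e = (if e \<in> H then {True} else if e \<in> Z then {False} else UNIV)" for e
  have "{G. (\<forall>e\<in>Z. \<not> G e) \<and> (\<forall>e\<in>H. G e)} = Pi D V"
    using HZ by (auto simp: V_def Pi_def)
  then have "measure_pmf.prob (Pi_pmf D False (\<lambda>_. bernoulli_pmf p)) {G. (\<forall>e\<in>Z. \<not> G e) \<and> (\<forall>e\<in>H. G e)}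
      = (\<Prod>e\<in>D. measure_pmf.prob (bernoulli_pmf p) (V e))"
    by (simp add: measure_Pi_pmf_Pi[OF D])
  also have "\<dots> = (\<Prod>e\<in>D. if e \<in> H then p else if e \<in> Z then 1 - p else 1)"
    using p by (intro prod.cong) (auto simp: V_def measure_pmf_single)
  also have "\<dots> = p ^ card H * (1 - p) ^ card Z"
  proof -
    define g where "g e = (if e \<in> H then p else if e \<in> Z then 1 - p else 1)" for e
    have "Z \<subseteq> D - H" using HZ by auto
    have "prod g D = prod g (D - H) * prod g H"
      by (rule prod.subset_diff[OF HZ(1) D])
    also have "prod g (D - H) = prod g (D - H - Z) * prod g Z"
      using D by (intro prod.subset_diff[OF \<open>Z \<subseteq> D - H\<close>]) simp
    also have "prod g (D - H - Z) = 1" by (intro prod.neutral) (simp add: g_def)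
    also have "prod g Z = (\<Prod>e\<in>Z. 1 - p)"
      using HZ(3) by (intro prod.cong) (auto simp: g_def)
    also have "prod g H = p ^ card H" by (simp add: g_def)
    finally show ?thesis by (simp add: g_def mult.commute)
  qed
  finally show ?thesis .
qed

lemma card_boundary_pairs:
  assumes "A \<subseteq> {..<n1}" "B \<subseteq> {..<n2}"
  shows "card (boundary_pairs n1 n2 A B) = card A * (n2 - card B) + card B * (n1 - card A)"
proof -
  have fin: "finite A" "finite B" using assms finite_subset by auto
  have "boundary_pairs n1 n2 A B = A \<times> ({..<n2} - B) \<union> ({..<n1} - A) \<times> B"
    using assms by (auto simp: boundary_pairs_def)
  then show ?thesis using assms fin
    by (simp add: card_Un_disjoint card_cartesian_product card_Diff_subset disjoint_iff)
qed

lemma card_PiE_opposite_side: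
  assumes "finite A" "finite B"
  shows "card (PiE (bip_vertices A B) (opposite_side A B)) = card B ^ card A * card A ^ card B"
proof -
  have "card (PiE (bip_vertices A B) (opposite_side A B))
      = (\<Prod>v\<in>Inl ` A. card (opposite_side A B v)) * (\<Prod>v\<in>Inr ` B. card (opposite_side A B v))"
    using assms unfolding bip_vertices_def by (simp add: card_PiE, subst prod.union_disjoint) auto
  then show ?thesis by (simp add: prod.reindex opposite_side_def card_image)
qed

lemma finite_unicyclic_witnesses: "finite A \<Longrightarrow> finite B \<Longrightarrow> finite (unicyclic_witnesses A B)"
  unfolding unicyclic_witnesses_def
  by (intro finite_imageI finite_cartesian_product finite_PiE)
    (auto simp: bip_vertices_def opposite_side_def split: sum.splits)

lemma card_unicyclic_witnesses_le:
  assumes "finite A" "finite B"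
  shows "card (unicyclic_witnesses A B) \<le> card B ^ card A * card A ^ card B * (card A * card B)"
proof -
  have "card (unicyclic_witnesses A B)
      \<le> card (PiE (bip_vertices A B) (opposite_side A B) \<times> (A \<times> B))"
    unfolding unicyclic_witnesses_def
    by (intro card_image_le finite_cartesian_product finite_PiE)
      (use assms in \<open>auto simp: bip_vertices_def opposite_side_def split: sum.splits\<close>)
  then show ?thesis using assms by (simp add: card_cartesian_product card_PiE_opposite_side)
qed

lemma unicyclic_witness_subset: "H \<in> unicyclic_witnesses A B \<Longrightarrow> H \<subseteq> A \<times> B"
proof -
  assume "H \<in> unicyclic_witnesses A B"
  then obtain par e where par: "par \<in> PiE (bip_vertices A B) (opposite_side A B)"
    and "e \<in> A \<times> B" and H: "H = parent_edges (bip_vertices A B) (Inl (Min A)) par \<union> {e}"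
    unfolding unicyclic_witnesses_def by auto
  have "edge_pair v (par v) \<in> A \<times> B" if "v \<in> bip_vertices A B" for v
    using that PiE_mem[OF par that]
    by (cases v) (auto simp: opposite_side_def bip_vertices_def)
  then have "parent_edges (bip_vertices A B) (Inl (Min A)) par \<subseteq> A \<times> B"
    unfolding parent_edges_def by blast
  then show ?thesis using \<open>e \<in> A \<times> B\<close> H by blast
qed

definition unicyclic_weight :: "nat \<Rightarrow> nat \<Rightarrow> real \<Rightarrow> nat \<Rightarrow> nat \<Rightarrow> real"
  where "unicyclic_weight n1 n2 p a b =
    real (b ^ a * a ^ b * (a * b)) * p ^ (a + b) * (1 - p) ^ (a * (n2 - b) + b * (n1 - a))"

lemma prob_unicyclic_component_event_le:
  assumes AB: "A \<subseteq> {..<n1}" "B \<subseteq> {..<n2}" and p: "0 \<le> p" "p \<le> 1"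
  shows "measure_pmf.prob (bip_random n1 n2 p) (unicyclic_component_event n1 n2 A B)
    \<le> unicyclic_weight n1 n2 p (card A) (card B)"
proof -
  have fin: "finite A" "finite B" using AB finite_subset by auto
  define W where "W = {H \<in> unicyclic_witnesses A B. card H = card A + card B}"
  define F where "F H = {G. (\<forall>e \<in> boundary_pairs n1 n2 A B. \<not> G e) \<and> (\<forall>e\<in>H. G e)}" for H
  define q where "q = p ^ (card A + card B) * (1 - p) ^ card (boundary_pairs n1 n2 A B)"
  have finW: "finite W" using finite_unicyclic_witnesses[OF fin] by (simp add: W_def)
  have "measure_pmf.prob (bip_random n1 n2 p) (unicyclic_component_event n1 n2 A B)
      \<le> measure_pmf.prob (bip_random n1 n2 p) (\<Union>H\<in>W. F H)"
    by (intro measure_pmf.finite_measure_mono) (auto simp: unicyclic_component_event_def W_def F_def)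
  also have "\<dots> \<le> (\<Sum>H\<in>W. measure_pmf.prob (bip_random n1 n2 p) (F H))"
    by (rule measure_UNION_le[OF finW]) auto
  also have "\<dots> = (\<Sum>H\<in>W. q)"
  proof (rule sum.cong[OF refl])
    fix H assume H: "H \<in> W"
    then have "H \<subseteq> A \<times> B" by (auto simp: W_def dest: unicyclic_witness_subset)
    then have "H \<subseteq> {..<n1} \<times> {..<n2}" "H \<inter> boundary_pairs n1 n2 A B = {}"
      using AB by (auto simp: boundary_pairs_def)
    moreover have "boundary_pairs n1 n2 A B \<subseteq> {..<n1} \<times> {..<n2}"
      by (auto simp: boundary_pairs_def)
    ultimately show "measure_pmf.prob (bip_random n1 n2 p) (F H) = q"
      using H p unfolding bip_random_def F_def q_def W_def
      by (subst prob_Pi_bernoulli_pattern) auto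
  qed
  also have "\<dots> = real (card W) * q" by simp
  also have "\<dots> \<le> real (card B ^ card A * card A ^ card B * (card A * card B)) * q"
  proof (rule mult_right_mono)
    have "card W \<le> card (unicyclic_witnesses A B)"
      unfolding W_def by (rule card_mono[OF finite_unicyclic_witnesses[OF fin]]) auto
    then show "real (card W) \<le> real (card B ^ card A * card A ^ card B * (card A * card B))"
      using card_unicyclic_witnesses_le[OF fin] by linarith
  qed (use p in \<open>simp add: q_def\<close>)
  finally show ?thesis by (simp add: q_def unicyclic_weight_def card_boundary_pairs[OF AB] mult.assoc)
qed

definition small_balanced_pairs :: "nat \<Rightarrow> nat \<Rightarrow> real \<Rightarrow> real \<Rightarrow> (nat set \<times> nat set) set"
  where "small_balanced_pairs n1 n2 L M = {(A, B). A \<subseteq> {..<n1} \<and> B \<subseteq> {..<n2} \<and>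
    real (card A) \<le> L \<and> real (card B) \<le> M * real (card A)}"

definition small_balanced_sizes :: "nat \<Rightarrow> nat \<Rightarrow> real \<Rightarrow> real \<Rightarrow> (nat \<times> nat) set"
  where "small_balanced_sizes n1 n2 L M =
    {(a, b). a \<le> n1 \<and> b \<le> n2 \<and> real a \<le> L \<and> real b \<le> M * real a}"

lemma finite_small_balanced_pairs: "finite (small_balanced_pairs n1 n2 L M)"
  by (rule finite_subset[of _ "Pow {..<n1} \<times> Pow {..<n2}"]) (auto simp: small_balanced_pairs_def)

lemma num_sbu_le_card_events:
  "num_sbu \<beta>0 p n1 n2 G \<le> card {AB \<in> small_balanced_pairs n1 n2 (\<beta>0 * (ln (real n1))\<^sup>2) (2 * p * real n2).
     G \<in> unicyclic_component_event n1 n2 (fst AB) (snd AB)}"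
proof -
  define K where "K = {C \<in> bip_components n1 n2 G.
    small_comp \<beta>0 n1 C \<and> balanced_comp p n2 C \<and> unicyclic n1 n2 G C}"
  define classes where "classes C = ({i. Inl i \<in> C}, {j. Inr j \<in> C})" for C :: "(nat + nat) set"
  have "inj_on classes K"
  proof (rule inj_onI)
    fix C C' assume "C \<in> K" "C' \<in> K" and eq: "classes C = classes C'"
    then have "C \<in> bip_components n1 n2 G" "C' \<in> bip_components n1 n2 G"
      by (simp_all add: K_def)
    then have "C = bip_vertices {i. Inl i \<in> C} {j. Inr j \<in> C}"
      and "C' = bip_vertices {i. Inl i \<in> C'} {j. Inr j \<in> C'}"
      by (simp_all only: bip_component_eq_bip_vertices(1)[symmetric])
    with eq show "C = C'" unfolding classes_def by (metis prod.inject)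
  qed
  moreover have "classes C \<in> small_balanced_pairs n1 n2 (\<beta>0 * (ln (real n1))\<^sup>2) (2 * p * real n2) \<and>
      G \<in> unicyclic_component_event n1 n2 (fst (classes C)) (snd (classes C))" if C: "C \<in> K" for C
  proof -
    have comp: "C \<in> bip_components n1 n2 G" using C by (simp add: K_def)
    have "N1_part C = Inl ` {i. Inl i \<in> C}" "N2_part C = Inr ` {j. Inr j \<in> C}"
      by (auto simp: N1_part_def N2_part_def)
    then have "card (N1_part C) = card {i. Inl i \<in> C}" "card (N2_part C) = card {j. Inr j \<in> C}"
      by (simp_all add: card_image)
    then show ?thesis
      using C bip_component_eq_bip_vertices(2,3)[OF comp] unicyclic_component_in_event[OF comp]
      by (auto simp: K_def classes_def small_balanced_pairs_def small_comp_def balanced_comp_def)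
  qed
  ultimately have "card K \<le> card {AB \<in> small_balanced_pairs n1 n2 (\<beta>0 * (ln (real n1))\<^sup>2) (2 * p * real n2).
      G \<in> unicyclic_component_event n1 n2 (fst AB) (snd AB)}"
    using finite_small_balanced_pairs by (intro card_inj_on_le) auto
  then show ?thesis by (simp add: num_sbu_def K_def)
qed

lemma prob_card_events_ge_le:
  fixes M :: "'a pmf" and I :: "'b set"
  assumes I: "finite I" and c: "c > 0"
  shows "measure_pmf.prob M {x. c \<le> real (card {i\<in>I. x \<in> E i})}
    \<le> (\<Sum>i\<in>I. measure_pmf.prob M (E i)) / c"
proof -
  define u where "u x = (\<Sum>i\<in>I. indicator (E i) x :: real)" for x
  have u: "u x = real (card {i\<in>I. x \<in> E i})" for x
    unfolding u_def using I by (simp add: indicator_def sum.If_cases Int_def conj_commute)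
  have indicator_integrable: "integrable (measure_pmf M) (indicator (E i) :: _ \<Rightarrow> real)" for i
    by (rule measure_pmf.integrable_const_bound[where B = 1]) (auto simp: indicator_def)
  then have "integrable (measure_pmf M) u" unfolding u_def by auto
  then have "measure_pmf.prob M {x \<in> space (measure_pmf M). u x \<ge> c} \<le> (\<integral>x. u x \<partial>measure_pmf M) / c"
    by (rule integral_Markov_inequality_measure[of _ _ UNIV]) (auto simp: u c)
  also have "(\<integral>x. u x \<partial>measure_pmf M) = (\<Sum>i\<in>I. measure_pmf.prob M (E i))"
    unfolding u_def using indicator_integrable by simp
  finally show ?thesis by (simp add: u)
qed

lemma finite_small_balanced_sizes: "finite (small_balanced_sizes n1 n2 L M)"
  by (rule finite_subset[of _ "{..n1} \<times> {..n2}"]) (auto simp: small_balanced_sizes_def)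

lemma sum_small_balanced_pairs_by_card:
  fixes f :: "nat \<Rightarrow> nat \<Rightarrow> real"
  shows "(\<Sum>AB \<in> small_balanced_pairs n1 n2 L M. f (card (fst AB)) (card (snd AB)))
    = (\<Sum>ab \<in> small_balanced_sizes n1 n2 L M.
         real (n1 choose fst ab) * real (n2 choose snd ab) * f (fst ab) (snd ab))"
proof -
  let ?S = "small_balanced_pairs n1 n2 L M"
  let ?size = "\<lambda>AB :: nat set \<times> nat set. (card (fst AB), card (snd AB))"
  have fiber: "{AB \<in> ?S. ?size AB = ab} =
      {A. A \<subseteq> {..<n1} \<and> card A = fst ab} \<times> {B. B \<subseteq> {..<n2} \<and> card B = snd ab}"
    if "ab \<in> small_balanced_sizes n1 n2 L M" for ab
    using that by (auto simp: small_balanced_pairs_def small_balanced_sizes_def)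
  have "card A \<le> n" if "A \<subseteq> {..<n}" for A :: "nat set" and n
    using card_mono[OF finite_lessThan that] by simp
  then have "?size ` ?S \<subseteq> small_balanced_sizes n1 n2 L M"
    by (auto simp: small_balanced_pairs_def small_balanced_sizes_def)
  then have "(\<Sum>AB \<in> ?S. f (card (fst AB)) (card (snd AB)))
      = (\<Sum>ab \<in> small_balanced_sizes n1 n2 L M. \<Sum>AB \<in> {AB \<in> ?S. ?size AB = ab}. f (card (fst AB)) (card (snd AB)))"
    by (intro sum.group[symmetric] finite_small_balanced_pairs finite_small_balanced_sizes)
  also have "\<dots> = (\<Sum>ab \<in> small_balanced_sizes n1 n2 L M. \<Sum>AB \<in> {AB \<in> ?S. ?size AB = ab}. f (fst ab) (snd ab))"
    by (intro sum.cong refl) auto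
  also have "\<dots> = (\<Sum>ab \<in> small_balanced_sizes n1 n2 L M.
      real (n1 choose fst ab) * real (n2 choose snd ab) * f (fst ab) (snd ab))"
    by (intro sum.cong refl) (simp add: fiber card_cartesian_product n_subsets)
  finally show ?thesis .
qed

lemma card_small_balanced_sizes_le:
  assumes L: "L \<ge> 0" and M: "M \<ge> 0"
  shows "real (card (small_balanced_sizes n1 n2 L M)) \<le> (L + 1) * (M * L + 1)"
proof -
  have "a \<le> nat \<lfloor>L\<rfloor> \<and> b \<le> nat \<lfloor>M * L\<rfloor>" if "(a, b) \<in> small_balanced_sizes n1 n2 L M" for a b
  proof -
    have a: "real a \<le> L" and "real b \<le> M * real a"
      using that by (auto simp: small_balanced_sizes_def)
    then have "real b \<le> M * L" using M by (meson mult_left_mono order_trans)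
    then show ?thesis using a by (simp add: le_nat_floor)
  qed
  then have "small_balanced_sizes n1 n2 L M \<subseteq> {..nat \<lfloor>L\<rfloor>} \<times> {..nat \<lfloor>M * L\<rfloor>}"
    by auto
  then have "card (small_balanced_sizes n1 n2 L M) \<le> (nat \<lfloor>L\<rfloor> + 1) * (nat \<lfloor>M * L\<rfloor> + 1)"
    using card_mono[of "{..nat \<lfloor>L\<rfloor>} \<times> {..nat \<lfloor>M * L\<rfloor>}"] by (simp add: card_cartesian_product)
  then have "real (card (small_balanced_sizes n1 n2 L M)) \<le> real ((nat \<lfloor>L\<rfloor> + 1) * (nat \<lfloor>M * L\<rfloor> + 1))"
    by (rule of_nat_mono)
  also have "\<dots> = (real (nat \<lfloor>L\<rfloor>) + 1) * (real (nat \<lfloor>M * L\<rfloor>) + 1)"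
    by (simp add: algebra_simps)
  also have "\<dots> \<le> (L + 1) * (M * L + 1)"
    using L M of_nat_floor[of L] of_nat_floor[of "M * L"] by (intro mult_mono add_mono) auto
  finally show ?thesis .
qed

section \<open>Estimates for a single pair of sizes\<close>

lemma power_div_fact_le_exp:
  fixes x :: real
  assumes "0 \<le> x"
  shows "x ^ n / fact n \<le> exp x"
proof -
  have "x ^ n / fact n \<le> (\<Sum>k\<le>n. x ^ k / fact k)"
    using assms by (intro member_le_sum) auto
  also have "\<dots> \<le> exp x"
    using assms summable_exp_generic[of x]
    by (auto simp: exp_def divide_inverse ac_simps intro!: sum_le_suminf)
  finally show ?thesis .
qed

lemma power_div_exp_le_fact: "(real n / exp 1) ^ n \<le> fact n"
proof -
  have "real n ^ n / fact n \<le> exp (real n)" by (rule power_div_fact_le_exp) simp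
  also have "exp (real n) = exp 1 ^ n" by (metis exp_of_nat_mult mult.right_neutral)
  finally show ?thesis by (simp add: power_divide divide_le_eq mult.commute)
qed

lemma binomial_le_exp_power:
  assumes "0 < k"
  shows "real (n choose k) \<le> (exp 1 * real n / real k) ^ k"
proof -
  have "real (n choose k) * fact k \<le> real n ^ k"
    using binomial_fact_pow[of n k] by (metis of_nat_fact of_nat_le_iff of_nat_mult of_nat_power)
  then have "real (n choose k) \<le> real n ^ k / fact k" by (simp add: field_simps)
  also have "\<dots> \<le> real n ^ k / (real k / exp 1) ^ k"
    using assms by (intro divide_left_mono power_div_exp_le_fact) auto
  also have "\<dots> = (exp 1 * real n / real k) ^ k" by (simp add: power_divide power_mult_distrib)
  finally show ?thesis .
qed

lemma binomial_mult_power_le: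
  assumes "0 < k" "0 \<le> q"
  shows "real (n choose k) * q ^ k \<le> (exp 1 * (real n * q / real k)) ^ k"
proof -
  have "real (n choose k) * q ^ k \<le> (exp 1 * real n / real k) ^ k * q ^ k"
    using binomial_le_exp_power[OF assms(1)] assms(2) by (intro mult_right_mono) auto
  also have "\<dots> = (exp 1 * real n / real k * q) ^ k" by (rule power_mult_distrib[symmetric])
  finally show ?thesis by (simp add: mult.assoc)
qed

lemma exp_one_mult_power:
  assumes "0 < x"
  shows "(exp 1 * x) ^ n = exp (real n * (1 + ln x))"
proof -
  have "exp (real n * (1 + ln x)) = exp (1 + ln x) ^ n" by (rule exp_of_nat_mult)
  also have "exp (1 + ln x) = exp 1 * x" using assms by (simp add: exp_add)
  finally show ?thesis by simp
qed

lemma square_mult_exp_le: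
  fixes g a :: real
  assumes g: "g < 0" and a: "0 \<le> a"
  shows "a\<^sup>2 * exp (g * a) \<le> 2 / g\<^sup>2"
proof -
  have "(- g * a)\<^sup>2 / fact 2 \<le> exp (- g * a)" using g a by (intro power_div_fact_le_exp) (simp add: mult_nonpos_nonneg)
  then have "g\<^sup>2 * a\<^sup>2 \<le> 2 * exp (- g * a)" by (simp add: power_mult_distrib)
  then have "a\<^sup>2 \<le> 2 * exp (- g * a) / g\<^sup>2" using g by (simp add: field_simps)
  then have "a\<^sup>2 * exp (g * a) \<le> 2 * exp (- g * a) / g\<^sup>2 * exp (g * a)"
    by (intro mult_right_mono) auto
  also have "\<dots> = 2 / g\<^sup>2" by (simp add: exp_minus field_simps)
  finally show ?thesis .
qed

text \<open>\<open>- ln_gap d = d - 1 - ln d > 0\<close> is the exponential rate at which the expected number of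
  unicyclic components decays in the size of their \<open>N\<^sub>1\<close>-class.\<close>
definition ln_gap :: "real \<Rightarrow> real" where "ln_gap y = ln y + 1 - y"

lemma ln_gap_nonpos: "0 < y \<Longrightarrow> ln_gap y \<le> 0"
  unfolding ln_gap_def using ln_le_minus_one[of y] by simp

lemma ln_gap_neg: "0 < y \<Longrightarrow> y \<noteq> 1 \<Longrightarrow> ln_gap y < 0"
  unfolding ln_gap_def using ln_le_minus_one[of y] ln_eq_minus_one[of y] by fastforce

lemma ln_gap_antimono:
  assumes "1 \<le> x" "x \<le> y"
  shows "ln_gap y \<le> ln_gap x"
proof -
  have "ln y - ln x = ln (y / x)" using assms by (simp add: ln_div)
  also have "\<dots> \<le> y / x - 1" using assms by (intro ln_le_minus_one) auto
  also have "\<dots> = (y - x) / x" using assms by (simp add: field_simps)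
  also have "\<dots> \<le> y - x" using assms by (simp add: divide_le_eq mult_le_cancel_left1)
  finally show ?thesis by (simp add: ln_gap_def)
qed

lemma ln_gap_scaled_antimono:
  assumes d: "1 \<le> d" "d \<le> y"
  shows "d * ln_gap y \<le> y * ln_gap d"
proof -
  define r where "r = y / d"
  have r: "1 \<le> r" and y: "y = d * r" using d by (auto simp: r_def field_simps)
  have "ln r \<le> r - 1" using r by (intro ln_le_minus_one) auto
  also have "\<dots> \<le> (r - 1) * (1 + ln d)" using r d by (simp add: mult_le_cancel_left1)
  finally have "1 + ln y \<le> r * (1 + ln d)" using r d by (simp add: y ln_mult algebra_simps)
  then have "d * (1 + ln y) \<le> y * (1 + ln d)" using d by (simp add: y mult_left_mono mult.assoc)
  then show ?thesis by (simp add: ln_gap_def algebra_simps y)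
qed

text \<open>If \<open>X \<ge> d\<close> the first term alone is at most \<open>a * ln_gap d\<close>; otherwise \<open>Y > d\<close> and the second
  term is.\<close>
lemma ln_gap_weighted_sum_le:
  fixes a b X Y d \<alpha> :: real
  assumes d: "d > 1" and X: "X > 0" and Y: "Y > 0" and XY: "X * Y = d\<^sup>2" and a: "a > 0" and b: "b > 0"
    and bY: "b * Y = \<alpha> * a" and \<alpha>: "\<alpha> \<ge> d"
  shows "a * ln_gap X + b * ln_gap Y \<le> a * ln_gap d"
proof (cases "d \<le> X")
  case True
  then have "a * ln_gap X \<le> a * ln_gap d" using ln_gap_antimono[of d X] a d by simp
  moreover have "b * ln_gap Y \<le> 0" using b ln_gap_nonpos[OF Y] by (simp add: mult_nonneg_nonpos)
  ultimately show ?thesis by simp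
next
  case False
  have Yd: "d < Y"
  proof (rule ccontr)
    assume "\<not> d < Y"
    have "X * Y < d * Y" using False Y by simp
    also have "d * Y \<le> d * d" using \<open>\<not> d < Y\<close> d by simp
    finally show False using XY by (simp add: power2_eq_square)
  qed
  have "d * (b * ln_gap Y) \<le> b * (Y * ln_gap d)"
    using ln_gap_scaled_antimono[of d Y] Yd d b by (simp add: mult_left_mono mult.left_commute)
  also have "\<dots> = \<alpha> * (a * ln_gap d)" by (simp only: mult.assoc[symmetric] bY)
  also have "\<dots> \<le> d * (a * ln_gap d)"
    using \<alpha> a ln_gap_nonpos[of d] d by (intro mult_right_mono_neg) (auto simp: mult_nonneg_nonpos)
  finally have "b * ln_gap Y \<le> a * ln_gap d" using d by simp
  moreover have "a * ln_gap X \<le> 0" using a ln_gap_nonpos[OF X] by (simp add: mult_nonneg_nonpos)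
  ultimately show ?thesis by simp
qed

lemma binomials_unicyclic_weight_le_exp:
  assumes p: "0 < p" "p \<le> 1" and a: "1 \<le> a" "a \<le> n1" and b: "1 \<le> b" "b \<le> n2"
  defines "X \<equiv> p * real n1 * real b / real a" and "Y \<equiv> p * real n2 * real a / real b"
  shows "real (n1 choose a) * real (n2 choose b) * unicyclic_weight n1 n2 p a b
    \<le> real a * real b * exp (real a * ln_gap X + real b * ln_gap Y + 2 * p * real a * real b)"
proof -
  have X: "X > 0" and Y: "Y > 0" using p a b by (auto simp: X_def Y_def)
  have aX: "real a * X = p * real n1 * real b" and bY: "real b * Y = p * real n2 * real a"
    using a b by (simp_all add: X_def Y_def)
  have binom1: "real (n1 choose a) * (real b * p) ^ a \<le> (exp 1 * X) ^ a"
    using binomial_mult_power_le[of a "real b * p" n1] a p by (simp add: X_def mult_ac)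
  have binom2: "real (n2 choose b) * (real a * p) ^ b \<le> (exp 1 * Y) ^ b"
    using binomial_mult_power_le[of b "real a * p" n2] b p by (simp add: Y_def mult_ac)
  define N where "N = a * (n2 - b) + b * (n1 - a)"
  define W where "W = - (real a * X + real b * Y) + 2 * p * real a * real b"
  have "real N = real a * (real n2 - real b) + real b * (real n1 - real a)"
    using a b by (simp add: N_def of_nat_diff)
  then have "p * real N = p * real n1 * real b + p * real n2 * real a - 2 * p * real a * real b"
    by (simp only:) (simp add: algebra_simps)
  then have "p * real N = - W" unfolding W_def aX bY by simp
  have nonedges: "(1 - p) ^ N \<le> exp W"
  proof -
    have "(1 - p) ^ N \<le> exp (- p) ^ N"
      using p exp_ge_add_one_self[of "- p"] by (intro power_mono) auto
    also have "\<dots> = exp (- (p * real N))" by (simp add: exp_of_nat_mult[symmetric] mult.commute)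
    finally show ?thesis using \<open>p * real N = - W\<close> by simp
  qed
  have "real (n1 choose a) * real (n2 choose b) * unicyclic_weight n1 n2 p a b
      = (real (n1 choose a) * (real b * p) ^ a) * (real (n2 choose b) * (real a * p) ^ b)
        * (real a * real b) * (1 - p) ^ N"
    by (simp add: unicyclic_weight_def N_def power_mult_distrib power_add mult_ac)
  also have "\<dots> \<le> (exp 1 * X) ^ a * (exp 1 * Y) ^ b * (real a * real b) * exp W"
    using binom1 binom2 nonedges p X Y
    by (intro mult_mono) (auto intro!: mult_nonneg_nonneg zero_le_power)
  also have "\<dots> = real a * real b * exp (real a * (1 + ln X) + real b * (1 + ln Y) + W)"
    by (simp only: exp_one_mult_power[OF X] exp_one_mult_power[OF Y] exp_add) (simp add: mult_ac)
  also have "real a * (1 + ln X) + real b * (1 + ln Y) + W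
      = real a * ln_gap X + real b * ln_gap Y + 2 * p * real a * real b"
    by (simp add: W_def ln_gap_def algebra_simps)
  finally show ?thesis .
qed

lemma edge_prob_mult_ge:
  assumes n: "0 < n1" "n1 \<le> n2" and p: "p = d / sqrt (real n1 * real n2)" and d: "0 \<le> d"
  shows "d \<le> p * real n2"
proof -
  have "sqrt (real n1 * real n2) \<le> sqrt (real n2 * real n2)"
    using n by (intro real_sqrt_le_mono mult_right_mono) auto
  then have "sqrt (real n1 * real n2) \<le> real n2" by simp
  then have "d * sqrt (real n1 * real n2) \<le> d * real n2" using d by (rule mult_left_mono)
  then show ?thesis using n by (simp add: p field_simps)
qed

lemma binomials_unicyclic_weight_le:
  assumes n: "0 < n1" "n1 \<le> n2" and p: "p = d / sqrt (real n1 * real n2)" "p \<le> 1" and d: "d > 1"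
    and ab: "a \<le> n1" "b \<le> n2" and balanced: "real b \<le> 2 * p * real n2 * real a"
  shows "real (n1 choose a) * real (n2 choose b) * unicyclic_weight n1 n2 p a b
    \<le> 4 * (p * real n2) / (ln_gap d)\<^sup>2 * exp (2 * p * real a * real b)"
proof (cases "a = 0 \<or> b = 0")
  case True
  then show ?thesis using n p d by (auto simp: unicyclic_weight_def)
next
  case False
  define \<alpha> where "\<alpha> = p * real n2"
  define X where "X = p * real n1 * real b / real a"
  define Y where "Y = p * real n2 * real a / real b"
  have p0: "0 < p" using n d by (simp add: p)
  have pp: "p\<^sup>2 * (real n1 * real n2) = d\<^sup>2" using n by (simp add: p power_divide)
  have \<alpha>: "d \<le> \<alpha>" unfolding \<alpha>_def using edge_prob_mult_ge[OF n p(1)] d by simp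
  have X: "X > 0" and Y: "Y > 0" using False p0 n by (auto simp: X_def Y_def)
  have "X * Y = d\<^sup>2" using False pp by (simp add: X_def Y_def field_simps power2_eq_square)
  moreover have "real b * Y = \<alpha> * real a" using False by (simp add: Y_def \<alpha>_def)
  ultimately have gap: "real a * ln_gap X + real b * ln_gap Y \<le> ln_gap d * real a"
    using ln_gap_weighted_sum_le[OF d X Y] False \<alpha> by (simp add: mult.commute)
  have g: "ln_gap d < 0" using d by (simp add: ln_gap_neg)
  have ab_le: "real a * real b \<le> 2 * \<alpha> * (real a)\<^sup>2"
    using mult_left_mono[OF balanced, of "real a"] by (simp add: \<alpha>_def power2_eq_square algebra_simps)
  have "real (n1 choose a) * real (n2 choose b) * unicyclic_weight n1 n2 p a b
      \<le> real a * real b * exp (real a * ln_gap X + real b * ln_gap Y + 2 * p * real a * real b)"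
    unfolding X_def Y_def using False by (intro binomials_unicyclic_weight_le_exp p0 p(2) ab) auto
  also have "\<dots> \<le> real a * real b * exp (ln_gap d * real a + 2 * p * real a * real b)"
    using gap by (intro mult_left_mono) auto
  also have "\<dots> = (real a * real b) * (exp (ln_gap d * real a) * exp (2 * p * real a * real b))"
    by (simp add: exp_add)
  also have "\<dots> \<le> (2 * \<alpha> * (real a)\<^sup>2) * (exp (ln_gap d * real a) * exp (2 * p * real a * real b))"
    using ab_le by (intro mult_right_mono) auto
  also have "\<dots> = 2 * \<alpha> * ((real a)\<^sup>2 * exp (ln_gap d * real a)) * exp (2 * p * real a * real b)"
    by (simp add: mult_ac)
  also have "\<dots> \<le> 2 * \<alpha> * (2 / (ln_gap d)\<^sup>2) * exp (2 * p * real a * real b)"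
    using square_mult_exp_le[OF g] p0 by (intro mult_right_mono mult_left_mono) (auto simp: \<alpha>_def)
  finally show ?thesis by (simp add: \<alpha>_def)
qed

section \<open>The expectation bound and Markov's inequality\<close>

definition sbu_expectation_bound :: "real \<Rightarrow> real \<Rightarrow> real \<Rightarrow> real \<Rightarrow> real"
  where "sbu_expectation_bound d \<alpha> p L =
    (L + 1) * (2 * \<alpha> * L + 1) * (4 * \<alpha> / (ln_gap d)\<^sup>2 * exp (4 * p * \<alpha> * L\<^sup>2))"

lemma sum_prob_unicyclic_events_le:
  assumes n: "0 < n1" "n1 \<le> n2" and p: "p = d / sqrt (real n1 * real n2)" "p \<le> 1" and d: "d > 1"
    and L: "L \<ge> 0"
  shows "(\<Sum>AB \<in> small_balanced_pairs n1 n2 L (2 * p * real n2).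
      measure_pmf.prob (bip_random n1 n2 p) (unicyclic_component_event n1 n2 (fst AB) (snd AB)))
    \<le> sbu_expectation_bound d (p * real n2) p L"
proof -
  let ?S = "small_balanced_pairs n1 n2 L (2 * p * real n2)"
  let ?sizes = "small_balanced_sizes n1 n2 L (2 * p * real n2)"
  let ?c = "4 * (p * real n2) / (ln_gap d)\<^sup>2 * exp (4 * p * (p * real n2) * L\<^sup>2)"
  have p0: "0 < p" using n d by (simp add: p)
  have "(\<Sum>AB \<in> ?S. measure_pmf.prob (bip_random n1 n2 p) (unicyclic_component_event n1 n2 (fst AB) (snd AB)))
      \<le> (\<Sum>AB \<in> ?S. unicyclic_weight n1 n2 p (card (fst AB)) (card (snd AB)))"
    using p0 p(2) by (intro sum_mono) (auto simp: small_balanced_pairs_def prob_unicyclic_component_event_le)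
  also have "\<dots> = (\<Sum>ab \<in> ?sizes. real (n1 choose fst ab) * real (n2 choose snd ab)
      * unicyclic_weight n1 n2 p (fst ab) (snd ab))"
    by (rule sum_small_balanced_pairs_by_card)
  also have "\<dots> \<le> (\<Sum>ab \<in> ?sizes. ?c)"
  proof (rule sum_mono)
    fix ab assume "ab \<in> ?sizes"
    moreover obtain a b where ab_eq: "ab = (a, b)" by (cases ab)
    ultimately have ab: "a \<le> n1" "b \<le> n2" "real a \<le> L" and bal: "real b \<le> 2 * p * real n2 * real a"
      by (auto simp: small_balanced_sizes_def)
    have "real b \<le> 2 * p * real n2 * L"
      using p0 by (intro order_trans[OF bal] mult_left_mono ab(3)) auto
    then have "real a * real b \<le> L * (2 * p * real n2 * L)" using ab(3) by (intro mult_mono) auto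
    then have "2 * p * (real a * real b) \<le> 2 * p * (L * (2 * p * real n2 * L))"
      using p0 by (intro mult_left_mono) auto
    then have exponent: "2 * p * real a * real b \<le> 4 * p * (p * real n2) * L\<^sup>2"
      by (simp add: power2_eq_square mult_ac)
    have "real (n1 choose a) * real (n2 choose b) * unicyclic_weight n1 n2 p a b
        \<le> 4 * (p * real n2) / (ln_gap d)\<^sup>2 * exp (2 * p * real a * real b)"
      by (rule binomials_unicyclic_weight_le[OF n p d ab(1,2) bal])
    also have "\<dots> \<le> ?c"
      using exponent p0 by (intro mult_left_mono) auto
    finally show "real (n1 choose fst ab) * real (n2 choose snd ab)
        * unicyclic_weight n1 n2 p (fst ab) (snd ab) \<le> ?c" by (simp add: ab_eq)
  qed
  also have "\<dots> = real (card ?sizes) * ?c" by simp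
  also have "\<dots> \<le> (L + 1) * (2 * p * real n2 * L + 1) * ?c"
    using card_small_balanced_sizes_le[OF L, of "2 * p * real n2"] p0 by (intro mult_right_mono) auto
  finally show ?thesis by (simp add: sbu_expectation_bound_def mult.assoc)
qed

lemma prob_num_sbu_le_ge:
  assumes n: "0 < n1" "n1 \<le> n2" and p: "p = d / sqrt (real n1 * real n2)" "p \<le> 1" and d: "d > 1"
    and \<beta>0: "\<beta>0 \<ge> 0" and t: "t > 0"
  shows "1 - sbu_expectation_bound d (p * real n2) p (\<beta>0 * (ln (real n1))\<^sup>2) / t
    \<le> measure_pmf.prob (bip_random n1 n2 p) {G. real (num_sbu \<beta>0 p n1 n2 G) \<le> t}"
proof -
  let ?L = "\<beta>0 * (ln (real n1))\<^sup>2"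
  let ?Y = "\<lambda>G. card {AB \<in> small_balanced_pairs n1 n2 ?L (2 * p * real n2).
    G \<in> unicyclic_component_event n1 n2 (fst AB) (snd AB)}"
  have "measure_pmf.prob (bip_random n1 n2 p) {G. t < real (num_sbu \<beta>0 p n1 n2 G)}
      \<le> measure_pmf.prob (bip_random n1 n2 p) {G. t \<le> real (?Y G)}"
    using num_sbu_le_card_events[of \<beta>0 p n1 n2]
    by (intro measure_pmf.finite_measure_mono) (auto intro: order.trans[OF less_imp_le])
  also have "\<dots> \<le> (\<Sum>AB \<in> small_balanced_pairs n1 n2 ?L (2 * p * real n2).
      measure_pmf.prob (bip_random n1 n2 p) (unicyclic_component_event n1 n2 (fst AB) (snd AB))) / t"
    by (rule prob_card_events_ge_le[OF finite_small_balanced_pairs t])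
  also have "\<dots> \<le> sbu_expectation_bound d (p * real n2) p ?L / t"
    using sum_prob_unicyclic_events_le[OF n p d] \<beta>0 t by (intro divide_right_mono) auto
  finally show ?thesis
    using measure_pmf.prob_compl[of "{G. t < real (num_sbu \<beta>0 p n1 n2 G)}" "bip_random n1 n2 p"]
    by (simp add: Compl_eq_Diff_UNIV[symmetric] Collect_neg_eq[symmetric] not_less)
qed

lemma edge_prob_scaling:
  assumes ratio: "real n1 = lam * real n2" and lam: "0 < lam" and n1: "0 < n1"
  shows "d / sqrt (real n1 * real n2) * real n2 = d / sqrt lam"
    and "d / sqrt (real n1 * real n2) = d / sqrt lam * lam / real n1"
proof -
  obtain s where s: "0 < s" "sqrt lam = s" "lam = s\<^sup>2" using lam by (metis real_sqrt_gt_0_iff real_sqrt_pow2 less_le)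
  have n2: "0 < real n2"
  proof (rule ccontr)
    assume "\<not> 0 < real n2"
    then show False using ratio n1 by simp
  qed
  have sq: "sqrt (real n1 * real n2) = s * real n2"
    using s n2 by (intro real_sqrt_unique) (auto simp: ratio power2_eq_square)
  show "d / sqrt (real n1 * real n2) * real n2 = d / sqrt lam"
    and "d / sqrt (real n1 * real n2) = d / sqrt lam * lam / real n1"
    unfolding sq using s n2 by (auto simp: ratio field_simps power2_eq_square)
qed

lemma prob_num_sbu_le_ge_scaled:
  assumes ratio: "real n1 = lam * real n2" and lam: "0 < lam" "lam \<le> 1" and d: "d > 1"
    and \<beta>0: "\<beta>0 \<ge> 0" and n1: "0 < n1" "d / sqrt lam * lam \<le> real n1" and t: "t > 0"
  shows "1 - sbu_expectation_bound d (d / sqrt lam) (d / sqrt lam * lam / real n1) (\<beta>0 * (ln (real n1))\<^sup>2) / t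
    \<le> measure_pmf.prob (bip_random n1 n2 (d / sqrt (real n1 * real n2)))
        {G. real (num_sbu \<beta>0 (d / sqrt (real n1 * real n2)) n1 n2 G) \<le> t}"
proof -
  note scaling = edge_prob_scaling[OF ratio lam(1) n1(1), of d]
  have "real n1 \<le> real n2" unfolding ratio using lam by (intro mult_left_le_one_le) auto
  then have n12: "n1 \<le> n2" by simp
  have p: "d / sqrt (real n1 * real n2) \<le> 1"
    unfolding scaling(2) using n1 by (subst divide_le_eq_1_pos) auto
  have "sbu_expectation_bound d (d / sqrt (real n1 * real n2) * real n2) (d / sqrt (real n1 * real n2))
      = sbu_expectation_bound d (d / sqrt lam) (d / sqrt lam * lam / real n1)"
    by (subst scaling(1), subst scaling(2), rule refl)
  with prob_num_sbu_le_ge[OF n1(1) n12 refl p d \<beta>0 t] show ?thesis by (simp only:)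
qed

theorem lemma4p6:
  fixes n1 n2 :: "nat \<Rightarrow> nat" and lam d \<beta>0 :: real
  assumes n1_inf: "filterlim n1 at_top sequentially"
    and ratio: "\<And>k. real (n1 k) = lam * real (n2 k)"
    and lam: "0 < lam" "lam \<le> 1"
    and d: "d > 1"
    and beta0: "\<beta>0 > 0"
    and johansson: "\<exists>\<beta>1 > 0. (\<lambda>k. measure_pmf.prob
          (bip_random (n1 k) (n2 k) (d / sqrt (real (n1 k) * real (n2 k))))
          {G. johansson_event \<beta>0 \<beta>1 (n1 k) (n2 k) G}) \<longlonglongrightarrow> 1"
  shows "\<exists>f :: nat \<Rightarrow> real. f \<in> o(\<lambda>k. (ln (real (n1 k))) ^ 5) \<and>
    (\<lambda>k. measure_pmf.prob
          (bip_random (n1 k) (n2 k) (d / sqrt (real (n1 k) * real (n2 k))))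
          {G. real (num_sbu \<beta>0 (d / sqrt (real (n1 k) * real (n2 k))) (n1 k) (n2 k) G) \<le> f k})
      \<longlonglongrightarrow> 1"
proof -
  define \<alpha> where "\<alpha> = d / sqrt lam"
  define f where "f k = ln (real (n1 k)) powr (9/2)" for k
  let ?prob = "\<lambda>k. measure_pmf.prob (bip_random (n1 k) (n2 k) (d / sqrt (real (n1 k) * real (n2 k))))
    {G. real (num_sbu \<beta>0 (d / sqrt (real (n1 k) * real (n2 k))) (n1 k) (n2 k) G) \<le> f k}"
  let ?B = "\<lambda>k. sbu_expectation_bound d \<alpha> (\<alpha> * lam / real (n1 k)) (\<beta>0 * (ln (real (n1 k)))\<^sup>2)"
  have "0 < \<alpha>" "ln_gap d < 0" using lam d by (simp_all add: \<alpha>_def ln_gap_neg)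
  have n1_real: "filterlim (\<lambda>k. real (n1 k)) at_top sequentially"
    using filterlim_compose[OF filterlim_real_sequentially n1_inf] .
  have "(\<lambda>x::real. ln x powr (9/2)) \<in> o(\<lambda>x. ln x ^ 5)" by real_asymp
  from landau_o.small.compose[OF this n1_real] have f_small: "f \<in> o(\<lambda>k. (ln (real (n1 k))) ^ 5)"
    by (simp add: f_def[abs_def])
  have "((\<lambda>x. 1 - sbu_expectation_bound d \<alpha> (\<alpha> * lam / x) (\<beta>0 * (ln x)\<^sup>2) / ln x powr (9/2))
      \<longlongrightarrow> 1) at_top"
    using beta0 lam \<open>0 < \<alpha>\<close> \<open>ln_gap d < 0\<close> unfolding sbu_expectation_bound_def by real_asymp
  from filterlim_compose[OF this n1_real] have lim: "(\<lambda>k. 1 - ?B k / f k) \<longlonglongrightarrow> 1"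
    by (simp add: f_def)
  have "eventually (\<lambda>k. max 2 (\<alpha> * lam) \<le> real (n1 k)) sequentially"
    using n1_real[unfolded filterlim_at_top] by blast
  then have bound: "eventually (\<lambda>k. 1 - ?B k / f k \<le> ?prob k) sequentially"
    by eventually_elim
      (intro prob_num_sbu_le_ge_scaled[OF ratio lam d less_imp_le[OF beta0], folded \<alpha>_def];
        simp add: f_def)
  show ?thesis
    by (intro exI[of _ f] conjI f_small tendsto_sandwich[OF bound _ lim tendsto_const])
      (simp add: measure_pmf.prob_le_1)
qed

end
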